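(* Let $\theta_0>0$ and let $F_N=\sum_{j=1}^N w_j\delta_{z_j}$ and $F'_{N'}=\sum_{j=1}^{N'}w'_j\delta_{z'_j}$ be probability measures on $(0,\infty)$. Then for every $K\le\min(N,N')$, \[ \|p_{\theta_0,F_N}-p_{\theta_0,F'_{N'}}\|_1\le 4\max_{1\le j\le K}\frac{|z_j-z'_j|}{z_j}+\sum_{j=1}^K|w_j-w'_j|+\sum_{j=K+1}^N w_j+\sum_{j=K+1}^{N'}w'_j. \]
   Context: For $\theta>0$ and a probability measure $F$ on $(0,\infty)$, $p_{\theta,F}(x,y)=\int z^2\theta e^{-z(x+\theta y)}\,dF(z)$ for $(x,y)\in(0,\infty)^2$. $\|\cdot\|_1$ is the $L^1$ norm with respect to Lebesgue measure on $(0,\infty)^2$. *)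

theory Defs
  imports "HOL-Analysis.Analysis"
begin

definition pdens :: "real \<Rightarrow> real measure \<Rightarrow> real \<times> real \<Rightarrow> real" where
  "pdens \<theta> F = (\<lambda>(x, y). \<integral> z. z\<^sup>2 * \<theta> * exp (- z * (x + \<theta> * y)) \<partial>F)"

definition fin_mix :: "nat \<Rightarrow> (nat \<Rightarrow> real) \<Rightarrow> (nat \<Rightarrow> real) \<Rightarrow> real measure" where
  "fin_mix N w z = density (count_space UNIV)
      (\<lambda>t. ennreal (\<Sum>j\<in>{1..N}. if z j = t then w j else 0))"

definition L1dist :: "(real \<times> real \<Rightarrow> real) \<Rightarrow> (real \<times> real \<Rightarrow> real) \<Rightarrow> ennreal" where
  "L1dist f g = (\<integral>\<^sup>+ q \<in> {0<..} \<times> {0<..}. ennreal \<bar>f q - g q\<bar> \<partial>lborel)"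

end

theory Submission
  imports Defs
begin

(*
  Each finite mixture density is a convex combination of the kernels
  g_a(x, y) = a e^(-a x) * (theta a) e^(-theta a y), products of two exponential
  densities of total mass 1. Splitting both mixtures into their first K atoms and the
  rest, the triangle inequality bounds the L1 distance by
  sum_{j<=K} (w_j |g_(z_j) - g_(z'_j)|_1 + |w_j - w'_j|) plus the two tail weights.
  For exponential densities |a e^(-a x) - b e^(-b x)|_1 <= 2 |a - b| / a, and the rate
  ratio is the same in both coordinates, so |g_a - g_b|_1 <= 4 |a - b| / a; since the
  w_j sum to at most 1, their weighted average is at most 4 max_j |z_j - z'_j| / z_j.
*)

lemma nn_integral_Ioi_eq_has_integral:
  fixes f :: "real \<Rightarrow> real"
  assumes "(f has_integral I) {0..}" "\<And>x. x \<ge> 0 \<Longrightarrow> f x \<ge> 0"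
  shows "(\<integral>\<^sup>+x\<in>{0<..}. ennreal (f x) \<partial>lborel) = ennreal I"
proof -
  have "(\<integral>\<^sup>+x\<in>{0<..}. ennreal (f x) \<partial>lborel) = (\<integral>\<^sup>+x. ennreal (indicator {0..} x * f x) \<partial>lborel)"
    by (rule nn_integral_cong_AE)
      (use AE_lborel_singleton[of 0] in \<open>eventually_elim, auto simp: indicator_def\<close>)
  also have "\<dots> = ennreal I"
    by (rule nn_integral_has_integral_lebesgue) (use assms in auto)
  finally show ?thesis .
qed

lemma has_integral_exp_minus_Ici: "c > 0 \<Longrightarrow> ((\<lambda>x::real. exp (-c * x)) has_integral 1 / c) {0..}"
  using has_integral_exp_minus_to_infinity[of c 0] by simp

lemma nn_integral_exponential_density:
  "c > 0 \<Longrightarrow> (\<integral>\<^sup>+x\<in>{0<..}. ennreal (c * exp (-c * x)) \<partial>lborel) = 1"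
  using nn_integral_Ioi_eq_has_integral[OF has_integral_mult_right[OF has_integral_exp_minus_Ici, of c c]]
  by simp

lemma has_integral_abs_exp_minus_diff:
  fixes a b :: real
  assumes "a > 0" "b > 0"
  shows "((\<lambda>x. \<bar>exp (-a * x) - exp (-b * x)\<bar>) has_integral \<bar>1 / a - 1 / b\<bar>) {0..}"
proof -
  have ordered: "((\<lambda>x. \<bar>exp (-a * x) - exp (-b * x)\<bar>) has_integral \<bar>1 / a - 1 / b\<bar>) {0..}"
    if "0 < a" "a \<le> b" for a b :: real
  proof -
    have "((\<lambda>x. exp (-a * x) - exp (-b * x)) has_integral 1 / a - 1 / b) {0..}"
      by (intro has_integral_diff has_integral_exp_minus_Ici) (use that in auto)
    moreover have "1 / b \<le> 1 / a"
      using that by (simp add: frac_le)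
    ultimately show ?thesis
      by (subst has_integral_cong[of _ _ "\<lambda>x. exp (-a * x) - exp (-b * x)"])
        (use that in \<open>auto simp: mult_right_mono\<close>)
  qed
  show ?thesis
    using ordered[of a b] ordered[of b a] assms
    by (cases "a \<le> b") (auto simp: abs_minus_commute)
qed

lemma nn_integral_exponential_density_diff_le:
  fixes a b :: real
  assumes "a > 0" "b > 0"
  shows "(\<integral>\<^sup>+x\<in>{0<..}. ennreal \<bar>a * exp (-a * x) - b * exp (-b * x)\<bar> \<partial>lborel)
    \<le> ennreal (2 * \<bar>a - b\<bar> / a)"
proof -
  define h where "h x = \<bar>a - b\<bar> * exp (-a * x) + b * \<bar>exp (-a * x) - exp (-b * x)\<bar>" for x
  have "\<bar>a * exp (-a * x) - b * exp (-b * x)\<bar> \<le> h x" for x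
  proof -
    have "a * exp (-a * x) - b * exp (-b * x) = (a - b) * exp (-a * x) + b * (exp (-a * x) - exp (-b * x))"
      by (simp add: algebra_simps)
    then show ?thesis
      unfolding h_def using \<open>b > 0\<close> by (metis abs_mult abs_of_pos abs_triangle_ineq exp_gt_zero)
  qed
  then have "(\<integral>\<^sup>+x\<in>{0<..}. ennreal \<bar>a * exp (-a * x) - b * exp (-b * x)\<bar> \<partial>lborel)
      \<le> (\<integral>\<^sup>+x\<in>{0<..}. ennreal (h x) \<partial>lborel)"
    by (intro nn_integral_mono mult_right_mono ennreal_leI) auto
  also have "\<dots> = ennreal (\<bar>a - b\<bar> * (1 / a) + b * \<bar>1 / a - 1 / b\<bar>)"
    unfolding h_def using assms
    by (intro nn_integral_Ioi_eq_has_integral has_integral_add has_integral_mult_right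
        has_integral_exp_minus_Ici has_integral_abs_exp_minus_diff) auto
  also have "\<bar>a - b\<bar> * (1 / a) + b * \<bar>1 / a - 1 / b\<bar> = 2 * \<bar>a - b\<bar> / a"
  proof -
    have "1 / a - 1 / b = (b - a) / (a * b)"
      using assms by (simp add: field_simps)
    then have "b * \<bar>1 / a - 1 / b\<bar> = \<bar>a - b\<bar> / a"
      using assms by (simp add: abs_minus_commute)
    then show ?thesis by simp
  qed
  finally show ?thesis .
qed

lemma nn_integral_Times_product:
  fixes f g :: "real \<Rightarrow> real"
  assumes [measurable]: "f \<in> borel_measurable borel" "g \<in> borel_measurable borel"
    "A \<in> sets borel" "B \<in> sets borel"
    and "\<And>x. f x \<ge> 0" "\<And>y. g y \<ge> 0"
  shows "(\<integral>\<^sup>+q\<in>A \<times> B. ennreal (f (fst q) * g (snd q)) \<partial>lborel)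
       = (\<integral>\<^sup>+x\<in>A. ennreal (f x) \<partial>lborel) * (\<integral>\<^sup>+y\<in>B. ennreal (g y) \<partial>lborel)"
proof -
  have "(\<integral>\<^sup>+q\<in>A \<times> B. ennreal (f (fst q) * g (snd q)) \<partial>lborel)
      = (\<integral>\<^sup>+q. ennreal (f (fst q) * g (snd q)) * indicator (A \<times> B) q \<partial>(lborel \<Otimes>\<^sub>M lborel))"
    by (simp add: lborel_prod)
  also have "\<dots> = (\<integral>\<^sup>+x. \<integral>\<^sup>+y. ennreal (f x * g y) * indicator (A \<times> B) (x, y) \<partial>lborel \<partial>lborel)"
    by (rule lborel.nn_integral_fst[symmetric, where f="\<lambda>q. ennreal (f (fst q) * g (snd q)) * indicator (A \<times> B) q", simplified])
      measurable
  also have "\<dots> = (\<integral>\<^sup>+x. \<integral>\<^sup>+y. (ennreal (f x) * indicator A x) * (ennreal (g y) * indicator B y) \<partial>lborel \<partial>lborel)"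
    by (simp add: ennreal_mult assms indicator_times ac_simps)
  also have "\<dots> = (\<integral>\<^sup>+x\<in>A. ennreal (f x) \<partial>lborel) * (\<integral>\<^sup>+y\<in>B. ennreal (g y) \<partial>lborel)"
    by (simp add: nn_integral_cmult nn_integral_multc)
  finally show ?thesis .
qed

lemma sets_borel_quadrant [measurable]: "{0<..} \<times> {0<..} \<in> sets (borel :: (real \<times> real) measure)"
  by (intro borel_open open_Times open_greaterThan)

definition exp_kernel :: "real \<Rightarrow> real \<Rightarrow> real \<times> real \<Rightarrow> real" where
  "exp_kernel \<theta> a = (\<lambda>(x, y). a\<^sup>2 * \<theta> * exp (- a * (x + \<theta> * y)))"

lemma exp_kernel_eq_product:
  "exp_kernel \<theta> a q = (a * exp (-a * fst q)) * (\<theta> * a * exp (-(\<theta> * a) * snd q))"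
  by (simp add: exp_kernel_def case_prod_beta power2_eq_square mult_exp_exp algebra_simps)

lemma borel_measurable_exp_kernel [measurable]: "exp_kernel \<theta> a \<in> borel_measurable borel"
  unfolding exp_kernel_def case_prod_beta by (intro borel_measurable_continuous_onI continuous_intros)

lemma exp_kernel_nonneg: "\<theta> > 0 \<Longrightarrow> exp_kernel \<theta> a q \<ge> 0"
  by (simp add: exp_kernel_def case_prod_beta)

lemma nn_integral_exp_kernel:
  assumes "\<theta> > 0" "a > 0"
  shows "(\<integral>\<^sup>+q\<in>{0<..} \<times> {0<..}. ennreal (exp_kernel \<theta> a q) \<partial>lborel) = 1"
  using assms nn_integral_exponential_density[of a] nn_integral_exponential_density[of "\<theta> * a"]
  unfolding exp_kernel_eq_product by (subst nn_integral_Times_product) auto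

lemma nn_integral_exp_kernel_diff_le:
  assumes "\<theta> > 0" "a > 0" "b > 0"
  shows "(\<integral>\<^sup>+q\<in>{0<..} \<times> {0<..}. ennreal \<bar>exp_kernel \<theta> a q - exp_kernel \<theta> b q\<bar> \<partial>lborel)
    \<le> ennreal (4 * \<bar>a - b\<bar> / a)"
proof -
  define e :: "real \<Rightarrow> real \<Rightarrow> real" where "e c x = c * exp (-c * x)" for c x
  define F where "F q = \<bar>e a (fst q) - e b (fst q)\<bar> * e (\<theta> * a) (snd q)" for q
  define G where "G q = e b (fst q) * \<bar>e (\<theta> * a) (snd q) - e (\<theta> * b) (snd q)\<bar>" for q
  have [measurable]: "F \<in> borel_measurable borel" "G \<in> borel_measurable borel"
    unfolding F_def G_def e_def by (intro borel_measurable_continuous_onI continuous_intros)+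
  have e_nonneg: "e c x \<ge> 0" if "c > 0" for c x
    using that by (simp add: e_def)
  have "\<bar>exp_kernel \<theta> a q - exp_kernel \<theta> b q\<bar> \<le> F q + G q" for q
  proof -
    have "exp_kernel \<theta> a q - exp_kernel \<theta> b q
        = (e a (fst q) - e b (fst q)) * e (\<theta> * a) (snd q)
          + e b (fst q) * (e (\<theta> * a) (snd q) - e (\<theta> * b) (snd q))"
      by (simp add: exp_kernel_eq_product e_def algebra_simps)
    then show ?thesis
      unfolding F_def G_def using e_nonneg assms
      by (metis abs_mult abs_of_nonneg abs_triangle_ineq mult_pos_pos)
  qed
  then have "(\<integral>\<^sup>+q\<in>{0<..} \<times> {0<..}. ennreal \<bar>exp_kernel \<theta> a q - exp_kernel \<theta> b q\<bar> \<partial>lborel)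
      \<le> (\<integral>\<^sup>+q\<in>{0<..} \<times> {0<..}. ennreal (F q) + ennreal (G q) \<partial>lborel)"
    using e_nonneg assms
    by (intro nn_integral_mono mult_right_mono) (auto simp: F_def G_def simp flip: ennreal_plus)
  also have "\<dots> = (\<integral>\<^sup>+q\<in>{0<..} \<times> {0<..}. ennreal (F q) \<partial>lborel)
      + (\<integral>\<^sup>+q\<in>{0<..} \<times> {0<..}. ennreal (G q) \<partial>lborel)"
    unfolding distrib_right by (intro nn_integral_add) measurable
  also have "\<dots> \<le> ennreal (2 * \<bar>a - b\<bar> / a) + ennreal (2 * \<bar>\<theta> * a - \<theta> * b\<bar> / (\<theta> * a))"
  proof (rule add_mono)
    show "(\<integral>\<^sup>+q\<in>{0<..} \<times> {0<..}. ennreal (F q) \<partial>lborel) \<le> ennreal (2 * \<bar>a - b\<bar> / a)"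
      using nn_integral_exponential_density_diff_le[of a b]
        nn_integral_exponential_density[of "\<theta> * a"] assms
      unfolding F_def e_def
      by (subst nn_integral_Times_product) (auto intro!: borel_measurable_continuous_onI continuous_intros)
    show "(\<integral>\<^sup>+q\<in>{0<..} \<times> {0<..}. ennreal (G q) \<partial>lborel) \<le> ennreal (2 * \<bar>\<theta> * a - \<theta> * b\<bar> / (\<theta> * a))"
      using nn_integral_exponential_density_diff_le[of "\<theta> * a" "\<theta> * b"]
        nn_integral_exponential_density[of b] assms
      unfolding G_def e_def
      by (subst nn_integral_Times_product) (auto intro!: borel_measurable_continuous_onI continuous_intros)
  qed
  also have "\<dots> = ennreal (4 * \<bar>a - b\<bar> / a)"
    using assms by (simp add: abs_mult flip: right_diff_distrib ennreal_plus)
  finally show ?thesis .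
qed

lemma pdens_eq_integral_exp_kernel: "pdens \<theta> F q = (\<integral>t. exp_kernel \<theta> t q \<partial>F)"
  by (simp add: pdens_def exp_kernel_def case_prod_beta)

lemma pdens_fin_mix:
  assumes "\<And>j. j \<in> {1..N} \<Longrightarrow> w j \<ge> 0"
  shows "pdens \<theta> (fin_mix N w z) = (\<lambda>q. \<Sum>j\<in>{1..N}. w j * exp_kernel \<theta> (z j) q)"
proof
  fix q :: "real \<times> real"
  define h where "h t = exp_kernel \<theta> t q" for t
  define d where "d t = (\<Sum>j\<in>{1..N}. if z j = t then w j else 0)" for t
  have "pdens \<theta> (fin_mix N w z) q = integral\<^sup>L (density (count_space UNIV) (\<lambda>t. ennreal (d t))) h"
    by (simp add: pdens_eq_integral_exp_kernel fin_mix_def h_def[abs_def] d_def)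
  also have "\<dots> = integral\<^sup>L (count_space UNIV) (\<lambda>t. d t * h t)"
    by (subst integral_density) (auto simp: d_def assms intro!: sum_nonneg)
  also have "\<dots> = integral\<^sup>L (count_space UNIV) (\<lambda>t. \<Sum>j\<in>{1..N}. indicator {z j} t * (w j * h (z j)))"
    unfolding d_def sum_distrib_right
    by (intro Bochner_Integration.integral_cong refl sum.cong) (auto simp: indicator_def)
  also have "\<dots> = (\<Sum>j\<in>{1..N}. w j * exp_kernel \<theta> (z j) q)"
    by (subst Bochner_Integration.integral_sum)
      (auto intro!: integrable_real_mult_indicator simp: h_def)
  finally show "pdens \<theta> (fin_mix N w z) q = (\<Sum>j\<in>{1..N}. w j * exp_kernel \<theta> (z j) q)" .
qed

lemma nn_integral_weighted_sum_le:
  fixes f :: "'i \<Rightarrow> 'a \<Rightarrow> real"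
  assumes "\<And>j. j \<in> A \<Longrightarrow> c j \<ge> 0" "\<And>j x. j \<in> A \<Longrightarrow> f j x \<ge> 0"
    and "\<And>j. j \<in> A \<Longrightarrow> f j \<in> borel_measurable M"
    and "\<And>j. j \<in> A \<Longrightarrow> (\<integral>\<^sup>+x. ennreal (f j x) \<partial>M) \<le> ennreal (r j)" "\<And>j. j \<in> A \<Longrightarrow> r j \<ge> 0"
  shows "(\<integral>\<^sup>+x. ennreal (\<Sum>j\<in>A. c j * f j x) \<partial>M) \<le> ennreal (\<Sum>j\<in>A. c j * r j)"
proof -
  have "(\<integral>\<^sup>+x. ennreal (\<Sum>j\<in>A. c j * f j x) \<partial>M) = (\<integral>\<^sup>+x. (\<Sum>j\<in>A. ennreal (c j) * ennreal (f j x)) \<partial>M)"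
    using assms by (intro nn_integral_cong) (simp add: ennreal_mult flip: sum_ennreal)
  also have "\<dots> = (\<Sum>j\<in>A. ennreal (c j) * (\<integral>\<^sup>+x. ennreal (f j x) \<partial>M))"
    using assms by (simp add: nn_integral_sum nn_integral_cmult)
  also have "\<dots> \<le> (\<Sum>j\<in>A. ennreal (c j) * ennreal (r j))"
    using assms by (intro sum_mono mult_left_mono) auto
  also have "\<dots> = ennreal (\<Sum>j\<in>A. c j * r j)"
    using assms by (simp add: ennreal_mult flip: sum_ennreal)
  finally show ?thesis .
qed

lemma nn_integral_abs_mixture_diff_le:
  fixes g g' :: "'i \<Rightarrow> 'a \<Rightarrow> real" and w w' d :: "'i \<Rightarrow> real"
  assumes "finite I" "finite I'" "C \<subseteq> I" "C \<subseteq> I'"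
    and [measurable]: "\<And>j. g j \<in> borel_measurable M" "\<And>j. g' j \<in> borel_measurable M"
    and g_nonneg: "\<And>j x. g j x \<ge> 0" "\<And>j x. g' j x \<ge> 0"
    and w_nonneg: "\<And>j. j \<in> I \<Longrightarrow> w j \<ge> 0" "\<And>j. j \<in> I' \<Longrightarrow> w' j \<ge> 0"
    and mass: "\<And>j. j \<in> I \<Longrightarrow> (\<integral>\<^sup>+x. ennreal (g j x) \<partial>M) \<le> 1"
      "\<And>j. j \<in> I' \<Longrightarrow> (\<integral>\<^sup>+x. ennreal (g' j x) \<partial>M) \<le> 1"
    and dist: "\<And>j. j \<in> C \<Longrightarrow> (\<integral>\<^sup>+x. ennreal \<bar>g j x - g' j x\<bar> \<partial>M) \<le> ennreal (d j)"
      "\<And>j. j \<in> C \<Longrightarrow> d j \<ge> 0"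
  shows "(\<integral>\<^sup>+x. ennreal \<bar>(\<Sum>j\<in>I. w j * g j x) - (\<Sum>j\<in>I'. w' j * g' j x)\<bar> \<partial>M)
    \<le> ennreal ((\<Sum>j\<in>C. w j * d j + \<bar>w j - w' j\<bar>) + (\<Sum>j\<in>I - C. w j) + (\<Sum>j\<in>I' - C. w' j))"
proof -
  define S1 where "S1 x = (\<Sum>j\<in>C. w j * \<bar>g j x - g' j x\<bar>)" for x
  define S2 where "S2 x = (\<Sum>j\<in>C. \<bar>w j - w' j\<bar> * g' j x)" for x
  define S3 where "S3 x = (\<Sum>j\<in>I - C. w j * g j x)" for x
  define S4 where "S4 x = (\<Sum>j\<in>I' - C. w' j * g' j x)" for x
  have w_C: "j \<in> C \<Longrightarrow> w j \<ge> 0" for j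
    using w_nonneg \<open>C \<subseteq> I\<close> by auto
  have S_nonneg: "S1 x \<ge> 0" "S2 x \<ge> 0" "S3 x \<ge> 0" "S4 x \<ge> 0" for x
    unfolding S1_def S2_def S3_def S4_def using w_C w_nonneg g_nonneg by (auto intro!: sum_nonneg)
  have [measurable]: "S1 \<in> borel_measurable M" "S2 \<in> borel_measurable M"
    "S3 \<in> borel_measurable M" "S4 \<in> borel_measurable M"
    unfolding S1_def[abs_def] S2_def[abs_def] S3_def[abs_def] S4_def[abs_def] by measurable
  have "\<bar>(\<Sum>j\<in>I. w j * g j x) - (\<Sum>j\<in>I'. w' j * g' j x)\<bar> \<le> S1 x + S2 x + S3 x + S4 x" for x
  proof -
    have "(\<Sum>j\<in>I. w j * g j x) - (\<Sum>j\<in>I'. w' j * g' j x)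
        = (\<Sum>j\<in>C. w j * (g j x - g' j x) + (w j - w' j) * g' j x) + S3 x - S4 x"
      using sum.subset_diff[OF \<open>C \<subseteq> I\<close> \<open>finite I\<close>, where g="\<lambda>j. w j * g j x"]
        sum.subset_diff[OF \<open>C \<subseteq> I'\<close> \<open>finite I'\<close>, where g="\<lambda>j. w' j * g' j x"]
      unfolding S3_def S4_def by (simp add: sum_subtractf algebra_simps)
    moreover have "\<bar>\<Sum>j\<in>C. w j * (g j x - g' j x) + (w j - w' j) * g' j x\<bar> \<le> S1 x + S2 x"
    proof -
      have "\<bar>\<Sum>j\<in>C. w j * (g j x - g' j x) + (w j - w' j) * g' j x\<bar>
          \<le> (\<Sum>j\<in>C. \<bar>w j * (g j x - g' j x) + (w j - w' j) * g' j x\<bar>)"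
        by (rule sum_abs)
      also have "\<dots> \<le> (\<Sum>j\<in>C. w j * \<bar>g j x - g' j x\<bar> + \<bar>w j - w' j\<bar> * g' j x)"
        using w_C g_nonneg
        by (intro sum_mono) (metis abs_mult abs_of_nonneg abs_triangle_ineq)
      finally show ?thesis
        unfolding S1_def S2_def by (simp add: sum.distrib)
    qed
    ultimately show ?thesis
      using S_nonneg[of x] by linarith
  qed
  then have "(\<integral>\<^sup>+x. ennreal \<bar>(\<Sum>j\<in>I. w j * g j x) - (\<Sum>j\<in>I'. w' j * g' j x)\<bar> \<partial>M)
      \<le> (\<integral>\<^sup>+x. ennreal (S1 x) + ennreal (S2 x) + ennreal (S3 x) + ennreal (S4 x) \<partial>M)"
    using S_nonneg by (intro nn_integral_mono) (simp flip: ennreal_plus)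
  also have "\<dots> = (\<integral>\<^sup>+x. S1 x \<partial>M) + (\<integral>\<^sup>+x. S2 x \<partial>M) + (\<integral>\<^sup>+x. S3 x \<partial>M) + (\<integral>\<^sup>+x. S4 x \<partial>M)"
    by (simp add: nn_integral_add)
  also have "\<dots> \<le> ennreal (\<Sum>j\<in>C. w j * d j) + ennreal (\<Sum>j\<in>C. \<bar>w j - w' j\<bar> * 1)
      + ennreal (\<Sum>j\<in>I - C. w j * 1) + ennreal (\<Sum>j\<in>I' - C. w' j * 1)"
    unfolding S1_def S2_def S3_def S4_def
    using w_C w_nonneg g_nonneg mass dist \<open>C \<subseteq> I\<close> \<open>C \<subseteq> I'\<close>
    by (intro add_mono nn_integral_weighted_sum_le) auto
  also have "\<dots> = ennreal ((\<Sum>j\<in>C. w j * d j + \<bar>w j - w' j\<bar>) + (\<Sum>j\<in>I - C. w j) + (\<Sum>j\<in>I' - C. w' j))"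
  proof -
    have "(\<Sum>j\<in>C. w j * d j) \<ge> 0" "(\<Sum>j\<in>I - C. w j) \<ge> 0" "(\<Sum>j\<in>I' - C. w' j) \<ge> 0"
      using w_C w_nonneg dist by (auto intro!: sum_nonneg)
    then show ?thesis by (simp add: sum.distrib)
  qed
  finally show ?thesis .
qed

lemma nn_integral_quadrant_restrict_space:
  fixes f :: "real \<times> real \<Rightarrow> ennreal"
  shows "(\<integral>\<^sup>+q\<in>{0<..} \<times> {0<..}. f q \<partial>lborel) = (\<integral>\<^sup>+q. f q \<partial>restrict_space lborel ({0<..} \<times> {0<..}))"
  by (rule nn_integral_restrict_space[symmetric]) simp

lemma L1dist_pdens_fin_mix_le:
  fixes w z w' z' :: "nat \<Rightarrow> real"
  assumes "\<theta> > 0" "K \<le> N" "K \<le> N'"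
    and "\<And>j. j \<in> {1..N} \<Longrightarrow> w j \<ge> 0 \<and> z j > 0" "\<And>j. j \<in> {1..N'} \<Longrightarrow> w' j \<ge> 0 \<and> z' j > 0"
  shows "L1dist (pdens \<theta> (fin_mix N w z)) (pdens \<theta> (fin_mix N' w' z'))
    \<le> ennreal ((\<Sum>j\<in>{1..K}. w j * (4 * \<bar>z j - z' j\<bar> / z j) + \<bar>w j - w' j\<bar>)
        + (\<Sum>j\<in>{K+1..N}. w j) + (\<Sum>j\<in>{K+1..N'}. w' j))"
proof -
  let ?M = "restrict_space lborel ({0<..} \<times> {0<..})"
  have mass: "(\<integral>\<^sup>+q. ennreal (exp_kernel \<theta> c q) \<partial>?M) \<le> 1" if "c > 0" for c
    using nn_integral_exp_kernel[OF \<open>\<theta> > 0\<close> that]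
    by (simp add: nn_integral_quadrant_restrict_space)
  have dist: "(\<integral>\<^sup>+q. ennreal \<bar>exp_kernel \<theta> (z j) q - exp_kernel \<theta> (z' j) q\<bar> \<partial>?M)
      \<le> ennreal (4 * \<bar>z j - z' j\<bar> / z j)" if "j \<in> {1..K}" for j
    using nn_integral_exp_kernel_diff_le[OF \<open>\<theta> > 0\<close>, of "z j" "z' j"] assms(2-5) that
    by (simp add: nn_integral_quadrant_restrict_space)
  have tails: "{1..N} - {1..K} = {K+1..N}" "{1..N'} - {1..K} = {K+1..N'}"
    using assms(2,3) by auto
  have d_nonneg: "4 * \<bar>z j - z' j\<bar> / z j \<ge> 0" if "j \<in> {1..K}" for j
    using assms(2,4) that by fastforce
  have mixture: "pdens \<theta> (fin_mix N w z) = (\<lambda>q. \<Sum>j\<in>{1..N}. w j * exp_kernel \<theta> (z j) q)"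
    by (rule pdens_fin_mix) (use assms(4) in auto)
  have mixture': "pdens \<theta> (fin_mix N' w' z') = (\<lambda>q. \<Sum>j\<in>{1..N'}. w' j * exp_kernel \<theta> (z' j) q)"
    by (rule pdens_fin_mix) (use assms(5) in auto)
  show ?thesis
    unfolding L1dist_def nn_integral_quadrant_restrict_space mixture mixture'
    using assms mass dist d_nonneg
    by (intro nn_integral_abs_mixture_diff_le[of "{1..N}" "{1..N'}" "{1..K}", unfolded tails])
      (auto simp: exp_kernel_nonneg intro!: measurable_restrict_space1)
qed

lemma sum_weighted_le_bound:
  fixes w r :: "'i \<Rightarrow> real"
  assumes "\<And>j. j \<in> A \<Longrightarrow> w j \<ge> 0" "sum w A \<le> 1" "\<And>j. j \<in> A \<Longrightarrow> r j \<le> R" "R \<ge> 0"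
  shows "(\<Sum>j\<in>A. w j * r j) \<le> R"
proof -
  have "(\<Sum>j\<in>A. w j * r j) \<le> (\<Sum>j\<in>A. w j * R)"
    using assms by (intro sum_mono mult_left_mono) auto
  also have "\<dots> = sum w A * R"
    by (simp add: sum_distrib_right)
  also have "\<dots> \<le> R"
    using assms mult_right_mono[of "sum w A" 1 R] by simp
  finally show ?thesis .
qed

theorem mainTheorem6:
  fixes \<theta>0 :: real and N N' K :: nat and w z w' z' :: "nat \<Rightarrow> real"
  assumes "\<theta>0 > 0"
    and "\<forall>j\<in>{1..N}. w j \<ge> 0 \<and> z j > 0" and "(\<Sum>j\<in>{1..N}. w j) = 1"
    and "\<forall>j\<in>{1..N'}. w' j \<ge> 0 \<and> z' j > 0" and "(\<Sum>j\<in>{1..N'}. w' j) = 1"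
    and "K \<le> min N N'"
  shows "L1dist (pdens \<theta>0 (fin_mix N w z)) (pdens \<theta>0 (fin_mix N' w' z'))
    \<le> ennreal (4 * Max ({0} \<union> {\<bar>z j - z' j\<bar> / z j | j. j \<in> {1..K}})
        + (\<Sum>j\<in>{1..K}. \<bar>w j - w' j\<bar>)
        + (\<Sum>j\<in>{K+1..N}. w j) + (\<Sum>j\<in>{K+1..N'}. w' j))"
proof -
  define R where "R = Max ({0} \<union> {\<bar>z j - z' j\<bar> / z j | j. j \<in> {1..K}})"
  have "finite ({0} \<union> {\<bar>z j - z' j\<bar> / z j | j. j \<in> {1..K}})"
    by simp
  then have R: "R \<ge> 0" "\<And>j. j \<in> {1..K} \<Longrightarrow> \<bar>z j - z' j\<bar> / z j \<le> R"
    unfolding R_def by (auto intro: Max_ge)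
  then have ratio_le: "4 * \<bar>z j - z' j\<bar> / z j \<le> 4 * R" if "j \<in> {1..K}" for j
    using that by fastforce
  have "(\<Sum>j\<in>{1..K}. w j) \<le> (\<Sum>j\<in>{1..N}. w j)"
    using assms(2,6) by (intro sum_mono2) auto
  then have weighted: "(\<Sum>j\<in>{1..K}. w j * (4 * \<bar>z j - z' j\<bar> / z j)) \<le> 4 * R"
    using assms(2,3,6) R(1) ratio_le by (intro sum_weighted_le_bound) auto
  have "L1dist (pdens \<theta>0 (fin_mix N w z)) (pdens \<theta>0 (fin_mix N' w' z'))
      \<le> ennreal ((\<Sum>j\<in>{1..K}. w j * (4 * \<bar>z j - z' j\<bar> / z j) + \<bar>w j - w' j\<bar>)
          + (\<Sum>j\<in>{K+1..N}. w j) + (\<Sum>j\<in>{K+1..N'}. w' j))"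
    using assms by (intro L1dist_pdens_fin_mix_le) auto
  also have "\<dots> \<le> ennreal (4 * R + (\<Sum>j\<in>{1..K}. \<bar>w j - w' j\<bar>)
      + (\<Sum>j\<in>{K+1..N}. w j) + (\<Sum>j\<in>{K+1..N'}. w' j))"
    using weighted by (intro ennreal_leI) (simp only: sum.distrib)
  finally show ?thesis
    unfolding R_def .
qed

end
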